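(* For every integer $k\ge1$, $$\tilde H_{2k+2}=\frac{2(k+1)}{4^k\tilde\omega^{2k+2}}\,[1+(-1)^{k+1}]\int_0^\infty e^{-t}f_1(i,t)\,t^{2k+1}\,dt,$$ where $e^{-t}f_1(i,t)=\dfrac{1+\cos t}{4(\cosh t-\cos t)}$. Equivalently, for $k\ge1$, $\tilde H_{4k}=\dfrac{8k}{4^{2k-1}\tilde\omega^{4k}}\displaystyle\int_0^\infty e^{-t}f_1(i,t)t^{4k-1}dt$ and $\tilde H_{4k+2}=0$.
   Context: Let $\tilde\omega=2\int_0^1\frac{dx}{\sqrt{1-x^4}}=\frac{\sqrt\pi}{2}\frac{\Gamma(1/4)}{\Gamma(3/4)}$, and let $\wp$ be the Weierstrass elliptic function with period lattice $\tilde\omega\mathbb Z+\tilde\omega i\mathbb Z$ (so $\wp'^2=4\wp^3-4\wp$). The Hurwitz numbers $\tilde H_n$ ($n\ge2$) are defined by the Laurent expansion $\wp(z)=\frac1{z^2}+\sum_{n\ge2}\frac{2^n\tilde H_n}{n}\frac{z^{n-2}}{(n-2)!}$ about $z=0$. Here $f_1(i,t)=\dfrac{\cos^2(t/2)}{1-2e^{-t}\cos t+e^{-2t}}$. *)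

theory Defs
  imports "HOL-Analysis.Analysis"
begin

definition omega_t :: real where
  "omega_t = 2 * integral {0..1} (\<lambda>x::real. 1 / sqrt (1 - x ^ 4))"

definition lat_pt :: "int \<times> int \<Rightarrow> complex" where
  "lat_pt p = complex_of_real omega_t * (of_int (fst p) + \<i> * of_int (snd p))"

text \<open>Regular part of the Weierstrass function for the lattice omega Z + omega i Z:
  wp z = 1/z^2 + wp_reg z, with wp_reg z = sum over nonzero lattice points w of
  1/(z-w)^2 - 1/w^2.\<close>
definition wp_reg :: "complex \<Rightarrow> complex" where
  "wp_reg z = infsum (\<lambda>p. 1 / (z - lat_pt p)^2 - 1 / (lat_pt p)^2) (UNIV - {(0,0)})"

text \<open>Hurwitz numbers: wp z = 1/z^2 + sum_{n>=2} (2^n H_n / n) z^(n-2)/(n-2)!,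
  i.e. the (n-2)-th derivative at 0 of the regular part equals 2^n H_n / n.\<close>
definition Hurwitz :: "nat \<Rightarrow> complex" where
  "Hurwitz n = of_nat n / 2 ^ n * (deriv ^^ (n - 2)) wp_reg 0"

definition f1_i :: "real \<Rightarrow> real" where
  "f1_i t = (cos (t / 2))^2 / (1 - 2 * exp (-t) * cos t + exp (-2 * t))"

end

theory Submission
  imports Defs "HOL-Real_Asymp.Real_Asymp"
begin

(*
  For n >= 3 the (n-2)-th Taylor coefficient of the regular part of wp at 0 is
  (n - 1) G_n / omega^n, where G_n is the sum of (x + iy)^(-n) over the nonzero Gaussian
  integers. Multiplying the lattice by i gives G_n = i^(-n) G_n, so G_n = 0 for n = 2 mod 4.
  For 4 dvd n, G_n is four times the sum over the sector -x < y <= x, whose points are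
  w_d(a, b) = (1 + a + b) + (b - a + d) i with a, b in N and d in {0, 1} according to the
  parity of x + y; the conjugate sector gives the same with d in {0, -1}. Writing
  w^(-n) = (n-1)!^(-1) * integral_0^oo t^(n-1) e^(-w t) dt and summing under the integral,
  the sum over a, b of 2 e^(-w_0 t) + e^(-w_1 t) + e^(-w_(-1) t) is a product of two
  geometric series in e^(-(1 +- i) t), and equals 4 e^(-t) f_1(i,t).
*)

lemma has_sum_product:
  fixes f :: "'a \<Rightarrow> 'c::{real_normed_field,banach}" and g :: "'b \<Rightarrow> 'c"
  assumes "(f has_sum F) A" "(g has_sum G) B"
    and "(\<lambda>a. norm (f a)) summable_on A" "(\<lambda>b. norm (g b)) summable_on B"
  shows "((\<lambda>p. f (fst p) * g (snd p)) has_sum F * G) (A \<times> B)"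
proof (rule has_sum_SigmaI)
  show "((\<lambda>y. f (fst (x, y)) * g (snd (x, y))) has_sum f x * G) B" for x
    using has_sum_cmult_right[OF assms(2)] by simp
  show "((\<lambda>x. f x * G) has_sum F * G) A"
    using has_sum_cmult_left[OF assms(1)] by simp
  have "(\<lambda>x. norm (f x) * infsum (\<lambda>y. norm (g y)) B) summable_on A"
    using summable_on_cmult_left[OF assms(3)] by simp
  then have "(\<lambda>x. infsum (\<lambda>y. norm (f x * g y)) B) summable_on A"
    by (simp add: norm_mult infsum_cmult_right')
  moreover have "(\<lambda>y. f x * g y) abs_summable_on B" for x
    using summable_on_cmult_right[OF assms(4), of "norm (f x)"] by (simp add: norm_mult)
  ultimately have "(\<lambda>p. f (fst p) * g (snd p)) abs_summable_on Sigma A (\<lambda>_. B)"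
    using Infinite_Sum.abs_summable_on_Sigma_iff[where f = "\<lambda>p. f (fst p) * g (snd p)" and A = A and B = "\<lambda>_. B"]
    by (simp add: infsum_nonneg)
  then show "(\<lambda>p. f (fst p) * g (snd p)) summable_on A \<times> B"
    by (rule abs_summable_summable)
qed

lemma summable_on_product_nonneg:
  fixes f :: "'a \<Rightarrow> real" and g :: "'b \<Rightarrow> real"
  assumes "f summable_on A" "g summable_on B" "\<And>a. f a \<ge> 0" "\<And>b. g b \<ge> 0"
  shows "(\<lambda>p. f (fst p) * g (snd p)) summable_on (A \<times> B)"
proof -
  have "(\<lambda>a. norm (f a)) summable_on A" "(\<lambda>b. norm (g b)) summable_on B"
    using assms by simp_all
  with assms(1,2) have "((\<lambda>p. f (fst p) * g (snd p)) has_sum infsum f A * infsum g B) (A \<times> B)"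
    by (intro has_sum_product has_sum_infsum)
  then show ?thesis
    by (rule has_sum_imp_summable)
qed

lemma has_sum_geometric:
  fixes x :: "'a::{real_normed_field,banach}"
  assumes "norm x < 1" shows "((\<lambda>n. x ^ n) has_sum 1 / (1 - x)) UNIV"
  using assms by (intro norm_summable_imp_has_sum)
    (auto simp: norm_power intro!: summable_geometric geometric_sums)

lemma summable_on_norm_power:
  fixes x :: "'a::{real_normed_field,banach}"
  assumes "norm x < 1" shows "(\<lambda>n. norm (x ^ n)) summable_on UNIV"
  using has_sum_geometric[of "norm x"] assms by (auto simp: norm_power summable_on_def)

lemma has_sum_geometric_product:
  fixes x y :: "'a::{real_normed_field,banach}"
  assumes "norm x < 1" "norm y < 1"
  shows "((\<lambda>q. x ^ fst q * y ^ snd q) has_sum 1 / ((1 - x) * (1 - y))) UNIV"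
    and "(\<lambda>q. norm (x ^ fst q * y ^ snd q)) summable_on UNIV"
proof -
  note geometric = has_sum_geometric has_sum_geometric summable_on_norm_power summable_on_norm_power
  show "((\<lambda>q. x ^ fst q * y ^ snd q) has_sum 1 / ((1 - x) * (1 - y))) UNIV"
    using has_sum_product[OF geometric] assms by simp
  show "(\<lambda>q. norm (x ^ fst q * y ^ snd q)) summable_on UNIV"
    using has_sum_product[OF geometric, of "norm x" "norm y"] assms
    by (auto simp: summable_on_def norm_mult norm_power)
qed

lemma sums_prod_decode:
  assumes "(h has_sum s) (UNIV :: (nat \<times> nat) set)"
  shows "(\<lambda>j. h (prod_decode j)) sums s"
  using assms by (intro has_sum_imp_sums) (subst has_sum_reindex_bij_betw[OF bij_prod_decode])

lemma sums_inverse_square_shift: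
  fixes z w :: "'a::{real_normed_field,banach}"
  assumes "norm z < norm w"
  shows "(\<lambda>j. of_nat (Suc j) * z ^ j / w ^ (j + 2)) sums (1 / (z - w) ^ 2)"
    and "summable (\<lambda>j. norm (of_nat (Suc j) * z ^ j / w ^ (j + 2)))"
proof -
  have w: "w \<noteq> 0" using assms by auto
  have "norm (z / w) < 1" using assms w by (simp add: norm_divide divide_simps)
  from sums_divide[OF geometric_deriv_sums[OF this], of "w ^ 2"]
  have "(\<lambda>j. of_nat (Suc j) * z ^ j / w ^ (j + 2)) sums (1 / (1 - z / w) ^ 2 / w ^ 2)"
    using w by (simp add: power_divide power_add power2_eq_square mult_ac)
  moreover have "(1 - z / w) ^ 2 * w ^ 2 = (z - w) ^ 2"
    using w by (simp add: power_mult_distrib[symmetric] field_simps power2_commute)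
  ultimately show "(\<lambda>j. of_nat (Suc j) * z ^ j / w ^ (j + 2)) sums (1 / (z - w) ^ 2)"
    by (simp add: divide_divide_eq_left)
  have "norm (norm z / norm w) < 1" using assms w by (simp add: divide_simps)
  from summable_divide[OF sums_summable[OF geometric_deriv_sums[OF this]], of "norm w ^ 2"]
  moreover have "norm (1 + of_nat j :: 'a) = 1 + real j" for j
    using norm_of_nat[of "Suc j", where 'a = 'a] by simp
  ultimately show "summable (\<lambda>j. norm (of_nat (Suc j) * z ^ j / w ^ (j + 2)))"
    by (simp add: norm_mult norm_divide norm_power power_divide power_add power2_eq_square mult_ac)
qed

section \<open>The integral of \<open>t\<^sup>m e\<^sup>-\<^sup>z\<^sup>t\<close>\<close>

fun power_exp_antideriv :: "nat \<Rightarrow> 'a::{real_normed_field,banach} \<Rightarrow> real \<Rightarrow> 'a" where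
  "power_exp_antideriv 0 z t = - exp (- z * of_real t) / z"
| "power_exp_antideriv (Suc n) z t =
     - ((of_real t :: 'a) ^ Suc n * exp (- z * of_real t) / z) + of_nat (Suc n) / z * power_exp_antideriv n z t"

lemma has_vector_derivative_exp_linear:
  fixes z :: "'a::{real_normed_field,banach}"
  shows "((\<lambda>t. exp (- (z * of_real t))) has_vector_derivative (- (z * exp (- (z * of_real t))))) (at t)"
proof -
  have "((\<lambda>t. - z * of_real t) has_vector_derivative (- z)) (at t)"
    by (auto intro!: derivative_eq_intros)
  from field_vector_diff_chain_at[OF this DERIV_exp] show ?thesis
    by (simp add: o_def)
qed

lemma has_vector_derivative_exp_linear':
  fixes z :: "'a::{real_normed_field,banach}"
  shows "((\<lambda>t. exp (- z * of_real t)) has_vector_derivative (- z * exp (- z * of_real t))) (at t)"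
  using has_vector_derivative_exp_linear[of z t] by simp

lemma has_vector_derivative_of_real_power:
  "((\<lambda>t. (of_real t :: 'a::{real_normed_field,banach}) ^ Suc n)
     has_vector_derivative (of_nat (Suc n) * of_real t ^ n)) (at t)"
proof -
  have "((\<lambda>t. (of_real t :: 'a)) has_vector_derivative 1) (at t)"
    by (auto intro!: derivative_eq_intros)
  from field_vector_diff_chain_at[OF this DERIV_power_Suc[OF DERIV_ident, of n "of_real t" UNIV]]
  show ?thesis by (simp add: o_def algebra_simps)
qed

lemma power_exp_antideriv_has_vector_derivative:
  fixes z :: "'a::{real_normed_field,banach}"
  assumes "z \<noteq> 0"
  shows "(power_exp_antideriv n z has_vector_derivative (of_real t ^ n * exp (- z * of_real t))) (at t)"
proof (induction n)
  case 0
  show ?case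
    using assms by (auto intro!: derivative_eq_intros has_vector_derivative_exp_linear simp: field_simps)
next
  case (Suc n)
  have "((\<lambda>t. - ((of_real t :: 'a) ^ Suc n * exp (- z * of_real t) / z)) has_vector_derivative
        (- (of_nat (Suc n) * of_real t ^ n * exp (- z * of_real t)) / z
          + of_real t ^ Suc n * exp (- z * of_real t))) (at t)"
    apply (rule derivative_eq_intros has_vector_derivative_of_real_power
        has_vector_derivative_exp_linear' refl)+
    using assms by (simp add: field_simps)
  from has_vector_derivative_add[OF this has_vector_derivative_mult_right[OF Suc.IH, of "of_nat (Suc n) / z"]]
  show ?case using assms by (simp add: field_simps)
qed

lemma power_exp_antideriv_0: "power_exp_antideriv n z 0 = - (fact n / z ^ Suc n)"
proof (induction n)
  case (Suc n)
  show ?case by (simp add: Suc fact_Suc power_Suc mult.commute mult.left_commute)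
qed simp

lemma power_exp_antideriv_tendsto_0:
  fixes z :: "'a::{real_normed_field,banach}"
  assumes "c > 0" and norm_exp: "\<And>t. norm (exp (- (z * of_real t))) = exp (- (c * t))"
    and "z \<noteq> 0"
  shows "(power_exp_antideriv n z \<longlongrightarrow> 0) at_top"
proof (induction n)
  case 0
  have "((\<lambda>t. exp (- c * t)) \<longlongrightarrow> 0) at_top"
    using \<open>c > 0\<close> by real_asymp
  then have "((\<lambda>t. exp (- c * t) / norm z) \<longlongrightarrow> 0) at_top"
    by (rule tendsto_divide_zero)
  then have "((\<lambda>t. norm (power_exp_antideriv 0 z t)) \<longlongrightarrow> 0) at_top"
    by (simp add: norm_divide norm_exp)
  then show ?case
    by (rule tendsto_norm_zero_cancel)
next
  case (Suc n)
  have "((\<lambda>t. t ^ Suc n * exp (- c * t)) \<longlongrightarrow> 0) at_top"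
    using \<open>c > 0\<close> by real_asymp
  then have "((\<lambda>t. t ^ Suc n * exp (- c * t) / norm z) \<longlongrightarrow> 0) at_top"
    by (rule tendsto_divide_zero)
  then have "((\<lambda>t. norm (- ((of_real t :: 'a) ^ Suc n * exp (- z * of_real t) / z))) \<longlongrightarrow> 0) at_top"
  proof (rule Lim_transform_eventually)
    show "\<forall>\<^sub>F t in at_top. t ^ Suc n * exp (- c * t) / norm z
        = norm (- ((of_real t :: 'a) ^ Suc n * exp (- z * of_real t) / z))"
      using eventually_ge_at_top[of 0]
      by eventually_elim (simp add: norm_divide norm_mult norm_exp norm_power)
  qed
  then have "((\<lambda>t. - ((of_real t :: 'a) ^ Suc n * exp (- z * of_real t) / z)) \<longlongrightarrow> 0) at_top"
    by (rule tendsto_norm_zero_cancel)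
  from tendsto_add[OF this tendsto_mult[OF tendsto_const Suc.IH, of "of_nat (Suc n) / z"]]
  show ?case by simp
qed

lemma power_exp_integral_real:
  fixes c :: real assumes "c > 0"
  shows "set_integrable lborel {0<..} (\<lambda>t. t ^ m * exp (- (c * t)))"
    and "(LINT t:{0<..}|lborel. t ^ m * exp (- (c * t))) = fact m / c ^ Suc m"
proof -
  have deriv: "DERIV (power_exp_antideriv m c) x :> x ^ m * exp (- (c * x))" for x
    using power_exp_antideriv_has_vector_derivative[of c m x] assms
    by (simp add: has_real_derivative_iff_has_vector_derivative)
  have lim_0: "((power_exp_antideriv m c \<circ> real_of_ereal) \<longlongrightarrow> power_exp_antideriv m c 0) (at_right 0)"
    unfolding zero_ereal_def ereal_tendsto_simps
    using DERIV_isCont[OF deriv[of 0]] by (auto simp: isCont_def intro: tendsto_mono[OF at_le])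
  have lim_infinity: "((power_exp_antideriv m c \<circ> real_of_ereal) \<longlongrightarrow> 0) (at_left \<infinity>)"
    unfolding ereal_tendsto_simps
    by (rule power_exp_antideriv_tendsto_0[of c]) (use assms in auto)
  have "set_integrable lborel (einterval 0 \<infinity>) (\<lambda>t. t ^ m * exp (- (c * t)))"
       "(LBINT t=0..\<infinity>. t ^ m * exp (- (c * t))) = 0 - power_exp_antideriv m c 0"
    by (rule interval_integral_FTC_nonneg[OF _ _ _ _ lim_0 lim_infinity];
        use deriv in \<open>auto intro!: continuous_intros\<close>)+
  then show "set_integrable lborel {0<..} (\<lambda>t. t ^ m * exp (- (c * t)))"
    and "(LINT t:{0<..}|lborel. t ^ m * exp (- (c * t))) = fact m / c ^ Suc m"
    by (simp_all add: zero_ereal_def interval_lebesgue_integral_0_infty[unfolded zero_ereal_def]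
        power_exp_antideriv_0)
qed

lemma power_exp_integral:
  fixes z :: complex assumes "Re z > 0"
  shows "set_integrable lborel {0<..} (\<lambda>t. of_real t ^ m * exp (- (z * of_real t)))"
    and "(LINT t:{0<..}|lborel. of_real t ^ m * exp (- (z * of_real t))) = fact m / z ^ Suc m"
proof -
  have "z \<noteq> 0" using assms by auto
  show int: "set_integrable lborel {0<..} (\<lambda>t. of_real t ^ m * exp (- (z * of_real t)))"
  proof (rule set_integrable_bound[OF power_exp_integral_real(1)[OF assms, of m]])
    show "set_borel_measurable lborel {0<..} (\<lambda>t. of_real t ^ m * exp (- (z * of_real t)))"
      unfolding set_borel_measurable_def by measurable
  qed (auto simp: norm_mult norm_power)
  have deriv: "(power_exp_antideriv m z has_vector_derivative (of_real x ^ m * exp (- (z * of_real x)))) (at x)"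
    for x using power_exp_antideriv_has_vector_derivative[OF \<open>z \<noteq> 0\<close>, of m x] by simp
  have lim_0: "((power_exp_antideriv m z \<circ> real_of_ereal) \<longlongrightarrow> power_exp_antideriv m z 0) (at_right 0)"
    unfolding zero_ereal_def ereal_tendsto_simps
    using has_vector_derivative_continuous[OF deriv, of 0]
    by (auto simp: isCont_def intro: tendsto_mono[OF at_le])
  have lim_infinity: "((power_exp_antideriv m z \<circ> real_of_ereal) \<longlongrightarrow> 0) (at_left \<infinity>)"
    unfolding ereal_tendsto_simps
    by (rule power_exp_antideriv_tendsto_0[of "Re z"]) (use assms \<open>z \<noteq> 0\<close> in auto)
  have "(LBINT t=0..\<infinity>. of_real t ^ m * exp (- (z * of_real t))) = 0 - power_exp_antideriv m z 0"
    by (rule interval_integral_FTC_integrable[OF _ deriv _ _ lim_0 lim_infinity])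
      (use int in \<open>auto intro!: continuous_intros simp: zero_ereal_def\<close>)
  then show "(LINT t:{0<..}|lborel. of_real t ^ m * exp (- (z * of_real t))) = fact m / z ^ Suc m"
    by (simp add: interval_lebesgue_integral_0_infty power_exp_antideriv_0)
qed

section \<open>Eisenstein sums over the Gaussian integers\<close>

definition gauss :: "int \<times> int \<Rightarrow> complex" where
  "gauss p = of_int (fst p) + \<i> * of_int (snd p)"

abbreviation gauss_nonzero :: "(int \<times> int) set" where
  "gauss_nonzero \<equiv> UNIV - {(0, 0)}"

lemma norm_gauss_squared: "norm (gauss (x, y)) ^ 2 = real_of_int x ^ 2 + real_of_int y ^ 2"
  by (simp add: gauss_def cmod_def)

lemma norm_gauss_ge_1:
  assumes "p \<noteq> (0, 0)" shows "norm (gauss p) \<ge> 1"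
proof -
  obtain x y where p: "p = (x, y)" by (cases p)
  have square_ge_1: "real_of_int u ^ 2 \<ge> 1" if "u \<noteq> 0" for u
  proof -
    have "\<bar>real_of_int u\<bar> \<ge> 1" using that by linarith
    then show ?thesis using one_le_power[of "\<bar>real_of_int u\<bar>" 2] by simp
  qed
  have "real_of_int x ^ 2 \<ge> 1 \<or> real_of_int y ^ 2 \<ge> 1"
    using assms p square_ge_1 by auto
  then have "norm (gauss p) ^ 2 \<ge> 1"
    unfolding p norm_gauss_squared by (auto intro: add_increasing add_increasing2)
  then show ?thesis
    by (metis abs_norm_cancel one_le_power power2_le_imp_le norm_ge_zero one_power2 abs_one)
qed

definition decay :: "int \<Rightarrow> real" where
  "decay x = (1 + real_of_int \<bar>x\<bar>) powr (-3/2)"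

lemma summable_on_decay: "decay summable_on UNIV"
proof -
  have "summable (\<lambda>n. real (Suc n) powr (-3/2))"
    using summable_Suc_iff[of "\<lambda>n. real n powr (-3/2)"] summable_real_powr_iff[of "-3/2"] by simp
  moreover from this have "summable (\<lambda>n. real (Suc (Suc n)) powr (-3/2))"
    using summable_Suc_iff[of "\<lambda>n. real (Suc n) powr (-3/2)"] by simp
  ultimately have "(decay \<circ> int) summable_on UNIV" "(decay \<circ> (\<lambda>n. - int (Suc n))) summable_on UNIV"
    by (subst summable_on_UNIV_nonneg_real_iff; simp add: decay_def o_def add.commute)+
  then have "decay summable_on (range int \<union> range (\<lambda>n. - int (Suc n)))"
    by (intro summable_on_union) (subst summable_on_reindex; simp add: inj_on_def)+
  moreover have "range int \<union> range (\<lambda>n. - int (Suc n)) = UNIV"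
  proof -
    have "x \<in> range int \<union> range (\<lambda>n. - int (Suc n))" for x :: int
      by (cases "x \<ge> 0") (auto intro: image_eqI[of _ _ "nat x"] image_eqI[of _ _ "nat (- x - 1)"])
    then show ?thesis by auto
  qed
  ultimately show ?thesis by simp
qed

text \<open>The bound comes from \<open>(1 + |x|)(1 + |y|) \<le> 4(x\<^sup>2 + y\<^sup>2)\<close> for \<open>(x, y) \<noteq> (0, 0)\<close>.\<close>

lemma inverse_norm_gauss_cube_le:
  assumes "p \<noteq> (0, 0)"
  shows "1 / norm (gauss p) ^ 3 \<le> 8 * (decay (fst p) * decay (snd p))"
proof -
  obtain x y where p: "p = (x, y)" by (cases p)
  define N where "N = norm (gauss p)"
  define a where "a = \<bar>real_of_int x\<bar>"
  define b where "b = \<bar>real_of_int y\<bar>"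
  define Q where "Q = (1 + a) * (1 + b)"
  have N1: "N \<ge> 1" using norm_gauss_ge_1[OF assms] by (simp add: N_def)
  have N2: "N ^ 2 = a ^ 2 + b ^ 2"
    using norm_gauss_squared[of x y] by (simp add: N_def a_def b_def p)
  have "a \<le> N ^ 2" "b \<le> N ^ 2"
    using N1 N2 abs_square_le_1[of a] abs_square_le_1[of b] one_le_power[of N 2]
    unfolding a_def b_def by (smt (verit) abs_le_square_iff power2_abs power2_eq_square
        mult_le_cancel_left1 zero_le_power2)+
  moreover have "a * b \<le> N ^ 2"
    using sum_squares_bound[of a b] N2 mult_nonneg_nonneg[of a b]
    unfolding a_def b_def power2_abs by linarith
  moreover have "1 \<le> N ^ 2" using N1 by (simp add: one_le_power)
  moreover have "Q = 1 + a + b + a * b" "(2 * N) ^ 2 = 4 * N ^ 2"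
    by (simp_all add: Q_def algebra_simps power_mult_distrib)
  ultimately have Q: "Q \<le> (2 * N) ^ 2" by linarith
  have Qpos: "Q > 0" by (simp add: Q_def a_def b_def add_pos_nonneg)
  have "Q powr (3/2) \<le> ((2 * N) ^ 2) powr (3/2)"
    using Q Qpos by (intro powr_mono2) auto
  also have "((2 * N) ^ 2) powr (3/2) = ((2 * N) powr 2) powr (3/2)"
    using N1 by simp
  also have "\<dots> = (2 * N) powr 3"
    unfolding powr_powr by simp
  also have "\<dots> = 8 * N ^ 3"
    using N1 by (simp add: power_mult_distrib)
  finally have "1 / N ^ 3 \<le> 8 / Q powr (3/2)"
    using N1 Qpos by (simp add: divide_simps)
  moreover have "decay x * decay y = 1 / Q powr (3/2)"
    unfolding decay_def Q_def a_def b_def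
    by (simp add: powr_mult powr_minus_divide)
  ultimately show ?thesis by (simp add: p N_def)
qed

lemma summable_on_inverse_norm_gauss_power:
  assumes "e \<ge> 3"
  shows "(\<lambda>p. 1 / norm (gauss p) ^ e) summable_on gauss_nonzero"
proof (rule summable_on_comparison_test)
  show "(\<lambda>p. 8 * (decay (fst p) * decay (snd p))) summable_on gauss_nonzero"
    using summable_on_cmult_right[OF summable_on_product_nonneg[OF summable_on_decay summable_on_decay]]
    by (rule summable_on_subset) (auto simp: decay_def)
  show "1 / norm (gauss p) ^ e \<le> 8 * (decay (fst p) * decay (snd p))" if "p \<in> gauss_nonzero" for p
  proof -
    have N: "norm (gauss p) \<ge> 1" using norm_gauss_ge_1 that by auto
    then have "1 / norm (gauss p) ^ e \<le> 1 / norm (gauss p) ^ 3"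
      using assms by (intro divide_left_mono power_increasing) (auto intro!: mult_pos_pos zero_less_power)
    also have "\<dots> \<le> 8 * (decay (fst p) * decay (snd p))"
      using inverse_norm_gauss_cube_le that by auto
    finally show ?thesis .
  qed
qed auto

definition eisenstein_term :: "nat \<Rightarrow> int \<times> int \<Rightarrow> complex" where
  "eisenstein_term e p = 1 / gauss p ^ e"

definition eisenstein :: "nat \<Rightarrow> complex" where
  "eisenstein e = infsum (eisenstein_term e) gauss_nonzero"

lemma norm_eisenstein_term: "norm (eisenstein_term e p) = 1 / norm (gauss p) ^ e"
  by (simp add: eisenstein_term_def norm_divide norm_power)

lemma summable_on_norm_eisenstein_term:
  "e \<ge> 3 \<Longrightarrow> A \<subseteq> gauss_nonzero \<Longrightarrow> (\<lambda>p. norm (eisenstein_term e p)) summable_on A"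
  using summable_on_subset[OF summable_on_inverse_norm_gauss_power] by (simp add: norm_eisenstein_term)

lemma summable_on_eisenstein_term:
  "e \<ge> 3 \<Longrightarrow> A \<subseteq> gauss_nonzero \<Longrightarrow> eisenstein_term e summable_on A"
  using abs_summable_summable summable_on_norm_eisenstein_term by blast

definition gauss_rot :: "int \<times> int \<Rightarrow> int \<times> int" where
  "gauss_rot p = (- snd p, fst p)"

definition gauss_rot_inv :: "int \<times> int \<Rightarrow> int \<times> int" where
  "gauss_rot_inv p = (snd p, - fst p)"

lemma gauss_rot: "gauss (gauss_rot p) = \<i> * gauss p"
  by (simp add: gauss_def gauss_rot_def algebra_simps)

lemma eisenstein_term_rot: "eisenstein_term e (gauss_rot p) = eisenstein_term e p / \<i> ^ e"
  by (simp add: eisenstein_term_def gauss_rot power_mult_distrib)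

lemma eisenstein_rot: "eisenstein e = eisenstein e / \<i> ^ e"
proof -
  have "infsum (\<lambda>p. eisenstein_term e (gauss_rot p)) gauss_nonzero = eisenstein e"
    unfolding eisenstein_def
    by (rule infsum_reindex_bij_witness[of _ gauss_rot_inv gauss_rot])
      (auto simp: gauss_rot_def gauss_rot_inv_def)
  then show ?thesis
    by (simp add: eisenstein_term_rot divide_inverse infsum_cmult_left' eisenstein_def)
qed

lemma eisenstein_eq_0:
  assumes "e mod 4 = 2" shows "eisenstein e = 0"
proof -
  have "e = 4 * (e div 4) + 2" using assms by presburger
  then have "\<i> ^ e = (\<i> ^ 4) ^ (e div 4) * \<i> ^ 2"
    by (metis power_add power_mult)
  then have "\<i> ^ e = -1" by (simp add: power_numeral_reduce)
  then show ?thesis using eisenstein_rot[of e] by simp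
qed

definition gauss_cnj :: "int \<times> int \<Rightarrow> int \<times> int" where
  "gauss_cnj p = (fst p, - snd p)"

lemma eisenstein_term_cnj: "eisenstein_term e (gauss_cnj p) = cnj (eisenstein_term e p)"
  by (simp add: eisenstein_term_def gauss_def gauss_cnj_def)

lemma cnj_eisenstein: "cnj (eisenstein e) = eisenstein e"
proof -
  have "infsum (\<lambda>p. eisenstein_term e (gauss_cnj p)) gauss_nonzero = eisenstein e"
    unfolding eisenstein_def
    by (rule infsum_reindex_bij_witness[of _ gauss_cnj gauss_cnj]) (auto simp: gauss_cnj_def)
  then show ?thesis
    by (simp add: eisenstein_def eisenstein_term_cnj)
qed

definition sector :: "(int \<times> int) set" where
  "sector = {p. 0 < fst p \<and> - fst p < snd p \<and> snd p \<le> fst p}"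

definition sector' :: "(int \<times> int) set" where
  "sector' = {p. 0 < fst p \<and> - fst p \<le> snd p \<and> snd p < fst p}"

lemma has_sum_eisenstein_term_rot:
  assumes "4 dvd e" "(eisenstein_term e has_sum s) A"
    and "\<And>p. p \<in> A \<Longrightarrow> gauss_rot p \<in> B" "\<And>p. p \<in> B \<Longrightarrow> gauss_rot_inv p \<in> A"
  shows "(eisenstein_term e has_sum s) B"
proof -
  have "\<i> ^ e = 1" using assms(1) by (auto simp: power_mult)
  then have "(eisenstein_term e has_sum s) A = (eisenstein_term e has_sum s) B"
    by (intro has_sum_reindex_bij_witness[of A gauss_rot_inv gauss_rot B])
      (use assms(3,4) eisenstein_term_rot in \<open>auto simp: gauss_rot_def gauss_rot_inv_def\<close>)
  then show ?thesis using assms(2) by simp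
qed

text \<open>The four rotations of \<open>sector\<close> tile the nonzero lattice, and for \<open>4 dvd e\<close> the
  summand is invariant under rotation.\<close>

lemma has_sum_eisenstein_term_sector:
  assumes "4 dvd e" "e \<ge> 3"
  shows "(eisenstein_term e has_sum eisenstein e / 4) sector"
proof -
  define S1 where "S1 = {p :: int \<times> int. 0 < snd p \<and> - snd p \<le> fst p \<and> fst p < snd p}"
  define S2 where "S2 = {p :: int \<times> int. fst p < 0 \<and> fst p \<le> snd p \<and> snd p < - fst p}"
  define S3 where "S3 = {p :: int \<times> int. snd p < 0 \<and> snd p < fst p \<and> fst p \<le> - snd p}"
  define T where "T = infsum (eisenstein_term e) sector"
  have T0: "(eisenstein_term e has_sum T) sector"
    unfolding T_def using assms by (intro has_sum_infsum summable_on_eisenstein_term) (auto simp: sector_def)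
  have T1: "(eisenstein_term e has_sum T) S1"
    by (rule has_sum_eisenstein_term_rot[OF assms(1) T0])
      (auto simp: S1_def sector_def gauss_rot_def gauss_rot_inv_def)
  have T2: "(eisenstein_term e has_sum T) S2"
    by (rule has_sum_eisenstein_term_rot[OF assms(1) T1])
      (auto simp: S1_def S2_def gauss_rot_def gauss_rot_inv_def)
  have T3: "(eisenstein_term e has_sum T) S3"
    by (rule has_sum_eisenstein_term_rot[OF assms(1) T2])
      (auto simp: S2_def S3_def gauss_rot_def gauss_rot_inv_def)
  have "(eisenstein_term e has_sum (T + T + T + T)) (sector \<union> S1 \<union> S2 \<union> S3)"
    by (intro has_sum_Un_disjoint T0 T1 T2 T3) (auto simp: S1_def S2_def S3_def sector_def)
  moreover have "sector \<union> S1 \<union> S2 \<union> S3 = gauss_nonzero"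
    by (auto simp: S1_def S2_def S3_def sector_def)
  ultimately have "eisenstein e = 4 * T"
    unfolding eisenstein_def by (simp add: has_sum_iff)
  then show ?thesis using T0 by simp
qed

lemma has_sum_eisenstein_term_sector':
  assumes "4 dvd e" "e \<ge> 3"
  shows "(eisenstein_term e has_sum eisenstein e / 4) sector'"
proof -
  have "((\<lambda>p. cnj (eisenstein_term e p)) has_sum cnj (eisenstein e / 4)) sector"
    using has_sum_eisenstein_term_sector[OF assms] by (simp only: has_sum_cnj_iff)
  then have "((\<lambda>p. eisenstein_term e (gauss_cnj p)) has_sum eisenstein e / 4) sector"
    by (simp add: eisenstein_term_cnj cnj_eisenstein)
  also have "?this = (eisenstein_term e has_sum eisenstein e / 4) sector'"
    by (rule has_sum_reindex_bij_witness[of sector gauss_cnj gauss_cnj])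
      (auto simp: sector_def sector'_def gauss_cnj_def)
  finally show ?thesis .
qed

definition diag :: "int \<Rightarrow> nat \<times> nat \<Rightarrow> int \<times> int" where
  "diag d q = (1 + int (fst q) + int (snd q), int (snd q) - int (fst q) + d)"

definition diag_inv :: "int \<Rightarrow> int \<times> int \<Rightarrow> nat \<times> nat" where
  "diag_inv d p = (nat ((fst p - 1 - snd p + d) div 2), nat ((fst p - 1 + snd p - d) div 2))"

text \<open>\<open>diag d\<close> is inverted by \<open>2a = x - y + d - 1\<close>, \<open>2b = x + y - d - 1\<close>, so its range consists
  of the points where both are even and nonnegative.\<close>

definition diag_range :: "int \<Rightarrow> (int \<times> int) set" where
  "diag_range d = {p. even (fst p + snd p + d + 1) \<and> snd p - d < fst p \<and> d - snd p < fst p}"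

lemma has_sum_diag_reindex:
  "((\<lambda>q. g (diag d q)) has_sum s) UNIV \<longleftrightarrow> (g has_sum s) (diag_range d)"
proof (rule has_sum_reindex_bij_witness[of UNIV "diag_inv d" "diag d"])
  fix q :: "nat \<times> nat"
  show "diag_inv d (diag d q) = q" by (cases q) (simp add: diag_def diag_inv_def)
  show "diag d q \<in> diag_range d" by (cases q) (auto simp: diag_def diag_range_def)
next
  fix p :: "int \<times> int" assume "p \<in> diag_range d"
  then show "diag d (diag_inv d p) = p"
    by (cases p) (simp add: diag_def diag_inv_def diag_range_def; presburger)
qed auto

lemma gauss_diag:
  "gauss (diag d q) = 1 + of_nat (fst q) * (1 - \<i>) + of_nat (snd q) * (1 + \<i>) + of_int d * \<i>"
  by (simp add: gauss_def diag_def complex_eq_iff)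

lemma Re_gauss_diag: "Re (gauss (diag d q)) = 1 + real (fst q) + real (snd q)"
  by (simp add: gauss_def diag_def)

lemma sector_eq_diag_range: "sector = diag_range 0 \<union> diag_range 1"
  by (auto simp: sector_def diag_range_def; presburger)

lemma sector'_eq_diag_range: "sector' = diag_range 0 \<union> diag_range (-1)"
  by (auto simp: sector'_def diag_range_def; presburger)

text \<open>Split \<open>sector\<close> and \<open>sector'\<close> by the parity of \<open>x + y\<close>: both contain the odd points
  \<open>diag_range 0\<close>, so adding their sums counts those twice.\<close>

lemma has_sum_eisenstein_term_diag:
  assumes "4 dvd e" "e \<ge> 3"
  shows "((\<lambda>q. 2 * eisenstein_term e (diag 0 q) + eisenstein_term e (diag (-1) q)
      + eisenstein_term e (diag 1 q)) has_sum eisenstein e / 2) UNIV"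
proof -
  define A where "A d = infsum (eisenstein_term e) (diag_range d)" for d
  have A: "(eisenstein_term e has_sum A d) (diag_range d)" for d
    unfolding A_def using assms
    by (intro has_sum_infsum summable_on_eisenstein_term) (auto simp: diag_range_def)
  have disj: "diag_range 0 \<inter> diag_range d = {}" if "odd d" for d
    using that by (auto simp: diag_range_def)
  have sector_sum: "A 0 + A 1 = eisenstein e / 4"
    using has_sum_Un_disjoint[OF A A disj, of 1] has_sum_eisenstein_term_sector[OF assms]
    unfolding sector_eq_diag_range by (rule has_sum_unique) simp
  have sector'_sum: "A 0 + A (-1) = eisenstein e / 4"
    using has_sum_Un_disjoint[OF A A disj, of "-1"] has_sum_eisenstein_term_sector'[OF assms]
    unfolding sector'_eq_diag_range by (rule has_sum_unique) simp
  have "2 * A 0 + A (-1) + A 1 = (A 0 + A 1) + (A 0 + A (-1))"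
    by (simp add: algebra_simps)
  also have "\<dots> = eisenstein e / 2"
    unfolding sector_sum sector'_sum by simp
  finally have sum: "2 * A 0 + A (-1) + A 1 = eisenstein e / 2" .
  have "((\<lambda>q. 2 * eisenstein_term e (diag 0 q) + eisenstein_term e (diag (-1) q)
      + eisenstein_term e (diag 1 q)) has_sum 2 * A 0 + A (-1) + A 1) UNIV"
    using A[folded has_sum_diag_reindex] by (intro has_sum_add has_sum_cmult_right)
  then show ?thesis
    unfolding sum .
qed

section \<open>The kernel as a double series of exponentials\<close>

definition theta_term :: "nat \<Rightarrow> nat \<times> nat \<Rightarrow> real \<Rightarrow> complex" where
  "theta_term m q t = of_real t ^ m * (2 * exp (- (gauss (diag 0 q) * of_real t))
     + exp (- (gauss (diag (-1) q) * of_real t)) + exp (- (gauss (diag 1 q) * of_real t))) / 4"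

lemma theta_term_integral:
  shows "set_integrable lborel {0<..} (theta_term m q)"
    and "(LINT t:{0<..}|lborel. theta_term m q t) = fact m / 4 *
      (2 * eisenstein_term (Suc m) (diag 0 q) + eisenstein_term (Suc m) (diag (-1) q)
        + eisenstein_term (Suc m) (diag 1 q))"
proof -
  define X where "X d t = of_real t ^ m * exp (- (gauss (diag d q) * of_real t))" for d t
  have I: "set_integrable lborel {0<..} (X d)"
    "(LINT t:{0<..}|lborel. X d t) = fact m * eisenstein_term (Suc m) (diag d q)" for d
    using power_exp_integral[of "gauss (diag d q)" m] unfolding X_def
    by (simp_all add: Re_gauss_diag add_pos_nonneg eisenstein_term_def)
  have theta: "theta_term m q = (\<lambda>t. (2 * X 0 t + X (-1) t + X 1 t) / 4)"
    by (simp add: theta_term_def X_def fun_eq_iff algebra_simps)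
  have I2: "set_integrable lborel {0<..} (\<lambda>t. 2 * X 0 t)"
    using I(1) by simp
  have I3: "set_integrable lborel {0<..} (\<lambda>t. 2 * X 0 t + X (-1) t)"
    by (rule set_integral_add(1)[OF I2 I(1)])
  show "set_integrable lborel {0<..} (theta_term m q)"
    unfolding theta by (intro set_integrable_divide set_integral_add(1)[OF I3 I(1)])
  show "(LINT t:{0<..}|lborel. theta_term m q t) = fact m / 4 *
      (2 * eisenstein_term (Suc m) (diag 0 q) + eisenstein_term (Suc m) (diag (-1) q)
        + eisenstein_term (Suc m) (diag 1 q))"
    unfolding theta set_integral_divide_zero set_integral_add(2)[OF I3 I(1)]
      set_integral_add(2)[OF I2 I(1)] set_integral_mult_right I(2)
    by (simp add: field_simps)
qed

lemma exp_gauss_diag: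
  "exp (- (gauss (diag d q) * of_real t)) = of_real (exp (- t)) * exp (- ((1 - \<i>) * of_real t)) ^ fst q
     * exp (- ((1 + \<i>) * of_real t)) ^ snd q * exp (- (of_int d * \<i> * of_real t))"
proof -
  have "- (gauss (diag d q) * of_real t) = - of_real t + of_nat (fst q) * (- ((1 - \<i>) * of_real t))
      + of_nat (snd q) * (- ((1 + \<i>) * of_real t)) + - (of_int d * \<i> * of_real t)"
    by (simp add: gauss_diag algebra_simps)
  then show ?thesis
    by (simp only: exp_add exp_of_nat_mult exp_of_real[symmetric] of_real_minus)
qed

lemma two_plus_exp_i_plus_exp_minus_i:
  "2 + exp (\<i> * of_real t) + exp (- (\<i> * of_real t)) = of_real (4 * cos (t / 2) ^ 2)"
proof -
  have "exp (\<i> * of_real t) + exp (- (\<i> * of_real t)) = of_real (2 * cos t)"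
    by (simp add: cos_exp_eq cos_of_real[symmetric])
  moreover have "cos t = 2 * cos (t / 2) ^ 2 - 1"
    using cos_double_cos[of "t / 2"] by simp
  ultimately show ?thesis
    by (simp add: add.assoc)
qed

lemma theta_term_eq_geometric:
  "theta_term m q t = of_real (t ^ m * exp (- t) * cos (t / 2) ^ 2)
     * (exp (- ((1 - \<i>) * of_real t)) ^ fst q * exp (- ((1 + \<i>) * of_real t)) ^ snd q)"
proof -
  have "2 * exp (- (gauss (diag 0 q) * of_real t)) + exp (- (gauss (diag (-1) q) * of_real t))
      + exp (- (gauss (diag 1 q) * of_real t))
    = of_real (exp (- t)) * exp (- ((1 - \<i>) * of_real t)) ^ fst q * exp (- ((1 + \<i>) * of_real t)) ^ snd q
      * (2 + exp (\<i> * of_real t) + exp (- (\<i> * of_real t)))"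
    unfolding exp_gauss_diag by (simp add: algebra_simps)
  then show ?thesis
    unfolding theta_term_def two_plus_exp_i_plus_exp_minus_i by (simp add: algebra_simps)
qed

lemma one_minus_exp_product:
  "(1 - exp (- ((1 - \<i>) * of_real t))) * (1 - exp (- ((1 + \<i>) * of_real t)))
    = of_real (1 - 2 * exp (- t) * cos t + exp (- 2 * t))"
proof -
  have "(1 - exp (- ((1 - \<i>) * of_real t))) * (1 - exp (- ((1 + \<i>) * of_real t)))
      = 1 - of_real (exp (- t)) * (exp (\<i> * of_real t) + exp (- (\<i> * of_real t)))
        + of_real (exp (- t) * exp (- t))"
    by (simp add: algebra_simps exp_of_real[symmetric] flip: exp_add)
  also have "\<dots> = of_real (1 - 2 * exp (- t) * cos t + exp (- 2 * t))"
    by (simp add: cos_exp_eq cos_of_real[symmetric] flip: exp_add)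
  finally show ?thesis .
qed

lemma has_sum_theta_term:
  assumes "t > 0"
  shows "((\<lambda>q. theta_term m q t) has_sum of_real (exp (- t) * f1_i t * t ^ m)) UNIV"
    and "(\<lambda>q. norm (theta_term m q t)) summable_on UNIV"
proof -
  have norm: "norm (exp (- ((1 - \<i>) * of_real t))) < 1" "norm (exp (- ((1 + \<i>) * of_real t))) < 1"
    using assms by simp_all
  note geometric = has_sum_geometric_product[OF norm]
  show "((\<lambda>q. theta_term m q t) has_sum of_real (exp (- t) * f1_i t * t ^ m)) UNIV"
    using has_sum_cmult_right[OF geometric(1), of "of_real (t ^ m * exp (- t) * cos (t / 2) ^ 2)"]
    unfolding theta_term_eq_geometric one_minus_exp_product
    by (simp add: f1_i_def field_simps)
  show "(\<lambda>q. norm (theta_term m q t)) summable_on UNIV"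
    using summable_on_cmult_right[OF geometric(2), of "norm (of_real (t ^ m * exp (- t) * cos (t / 2) ^ 2) :: complex)"]
    unfolding theta_term_eq_geometric by (simp add: norm_mult)
qed

lemma norm_theta_term_le:
  assumes "t > 0"
  shows "norm (theta_term m q t) \<le> t ^ m * exp (- ((1 + real (fst q) + real (snd q)) * t))"
proof -
  define E where "E d = exp (- (gauss (diag d q) * of_real t))" for d
  define c where "c = 1 + real (fst q) + real (snd q)"
  have norm_E: "norm (E d) = exp (- (c * t))" for d
    by (simp add: E_def Re_gauss_diag c_def)
  have "norm (2 * E 0 + E (-1) + E 1) \<le> norm (2 * E 0) + norm (E (-1)) + norm (E 1)"
    by (rule order_trans[OF norm_triangle_ineq add_right_mono[OF norm_triangle_ineq]])
  also have "\<dots> = 4 * exp (- (c * t))"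
    by (simp add: norm_mult norm_E)
  finally have "norm (2 * E 0 + E (-1) + E 1) / 4 \<le> exp (- (c * t))"
    by simp
  then have "t ^ m * (norm (2 * E 0 + E (-1) + E 1) / 4) \<le> t ^ m * exp (- (c * t))"
    using assms by (intro mult_left_mono) auto
  then show ?thesis
    using assms by (simp add: theta_term_def E_def norm_mult norm_divide norm_power c_def)
qed

lemma norm_gauss_diag_le: "norm (gauss (diag d q)) \<le> 2 * (1 + real (fst q) + real (snd q))"
  if "\<bar>d\<bar> \<le> 1"
proof -
  have "norm (gauss (diag d q)) \<le> \<bar>Re (gauss (diag d q))\<bar> + \<bar>Im (gauss (diag d q))\<bar>"
    by (rule cmod_le)
  also have "\<dots> \<le> 2 * (1 + real (fst q) + real (snd q))"
    using that by (simp add: gauss_def diag_def)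
  finally show ?thesis .
qed

lemma integral_norm_theta_term_le:
  "(LINT t:{0<..}|lborel. norm (theta_term m q t)) \<le> fact m * 2 ^ Suc m * norm (eisenstein_term (Suc m) (diag 0 q))"
proof -
  define c where "c = 1 + real (fst q) + real (snd q)"
  have c: "c > 0" by (simp add: c_def add_pos_nonneg)
  have "(LINT t:{0<..}|lborel. norm (theta_term m q t)) \<le> (LINT t:{0<..}|lborel. t ^ m * exp (- (c * t)))"
    by (rule set_integral_mono[OF set_integrable_norm[OF theta_term_integral(1)] power_exp_integral_real(1)[OF c]])
      (use norm_theta_term_le in \<open>auto simp: c_def\<close>)
  also have "\<dots> = fact m / c ^ Suc m"
    by (rule power_exp_integral_real(2)[OF c])
  also have "\<dots> \<le> fact m * 2 ^ Suc m * norm (eisenstein_term (Suc m) (diag 0 q))"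
  proof -
    have "gauss (diag 0 q) \<noteq> 0"
      using Re_gauss_diag[of 0 q] by (auto simp: add_pos_nonneg)
    moreover have "norm (gauss (diag 0 q)) ^ Suc m \<le> (2 * c) ^ Suc m"
      using norm_gauss_diag_le[of 0 q] by (intro power_mono) (auto simp: c_def)
    ultimately have "1 / c ^ Suc m \<le> 2 ^ Suc m / norm (gauss (diag 0 q)) ^ Suc m"
      using c by (simp add: divide_simps power_mult_distrib mult.commute)
    then have "fact m * (1 / c ^ Suc m) \<le> fact m * (2 ^ Suc m / norm (gauss (diag 0 q)) ^ Suc m)"
      by (intro mult_left_mono) auto
    then show ?thesis
      by (simp add: norm_eisenstein_term)
  qed
  finally show ?thesis .
qed

lemma summable_norm_eisenstein_term_diag:
  assumes "e \<ge> 3"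
  shows "summable (\<lambda>j. norm (eisenstein_term e (diag 0 (prod_decode j))))"
proof -
  have "(\<lambda>p. norm (eisenstein_term e p)) summable_on diag_range 0"
    using assms by (intro summable_on_norm_eisenstein_term) (auto simp: diag_range_def)
  then obtain s where "((\<lambda>p. norm (eisenstein_term e p)) has_sum s) (diag_range 0)"
    by (auto simp: summable_on_def)
  then have "(\<lambda>j. norm (eisenstein_term e (diag 0 (prod_decode j)))) sums s"
    by (intro sums_prod_decode has_sum_diag_reindex[where g = "\<lambda>p. norm (eisenstein_term e p)", THEN iffD2])
  then show ?thesis by (auto simp: sums_iff)
qed

text \<open>Sum and integral are interchanged by dominated convergence: the integrals of the norms of
  the terms are bounded by a summable lattice sum.\<close>

lemma integral_theta_kernel:
  assumes "4 dvd Suc m" "m \<ge> 2"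
  shows "set_integrable lborel {0<..} (\<lambda>t. exp (- t) * f1_i t * t ^ m)"
    and "complex_of_real (LINT t:{0<..}|lborel. exp (- t) * f1_i t * t ^ m) = fact m * eisenstein (Suc m) / 8"
proof -
  define g where "g t = exp (- t) * f1_i t * t ^ m" for t
  define f where "f j t = indicator {0<..} t *\<^sub>R theta_term m (prod_decode j) t" for j t
  have int: "integrable lborel (f j)" for j
    using theta_term_integral(1)[of m "prod_decode j"] unfolding set_integrable_def f_def .
  have sum_f: "(\<lambda>j. f j t) sums (indicator {0<..} t *\<^sub>R complex_of_real (g t))"
    and summable_norm_f: "summable (\<lambda>j. norm (f j t))" for t
  proof (atomize (full), cases "t > 0")
    case True
    obtain s where "((\<lambda>q. norm (theta_term m q t)) has_sum s) UNIV"
      using has_sum_theta_term(2)[OF True] by (auto simp: summable_on_def)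
    from sums_prod_decode[OF this] have "summable (\<lambda>j. norm (theta_term m (prod_decode j) t))"
      by (rule sums_summable)
    then show "(\<lambda>j. f j t) sums (indicator {0<..} t *\<^sub>R complex_of_real (g t)) \<and> summable (\<lambda>j. norm (f j t))"
      using sums_prod_decode[OF has_sum_theta_term(1)[OF True]] True
      by (simp add: f_def g_def)
  qed (simp add: f_def)
  have norm_f: "integral\<^sup>L lborel (\<lambda>t. norm (f j t)) = (LINT t:{0<..}|lborel. norm (theta_term m (prod_decode j) t))"
    for j unfolding f_def set_lebesgue_integral_def
    by (intro Bochner_Integration.integral_cong) (auto simp: indicator_def)
  have summable_int: "summable (\<lambda>j. integral\<^sup>L lborel (\<lambda>t. norm (f j t)))"
  proof (rule summable_comparison_test')
    show "summable (\<lambda>j. fact m * 2 ^ Suc m * norm (eisenstein_term (Suc m) (diag 0 (prod_decode j))))"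
      using summable_norm_eisenstein_term_diag[of "Suc m"] assms by (intro summable_mult) auto
    show "norm (integral\<^sup>L lborel (\<lambda>t. norm (f j t)))
        \<le> fact m * 2 ^ Suc m * norm (eisenstein_term (Suc m) (diag 0 (prod_decode j)))" for j
      using integral_norm_theta_term_le[of m "prod_decode j"] integral_nonneg_AE[of "\<lambda>t. norm (f j t)" lborel]
      by (simp add: norm_f)
  qed
  have sum_int: "(\<lambda>j. integral\<^sup>L lborel (f j)) sums (fact m / 4 * (eisenstein (Suc m) / 2))"
    unfolding f_def set_lebesgue_integral_def[symmetric] theta_term_integral(2)
    using assms by (intro sums_mult sums_prod_decode has_sum_eisenstein_term_diag) auto
  have "integrable lborel (\<lambda>t. \<Sum>j. f j t)"
    by (rule integrable_suminf[OF int AE_I2[OF summable_norm_f] summable_int])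
  then have "integrable lborel (\<lambda>t. complex_of_real (indicator {0<..} t *\<^sub>R g t))"
    using sum_f by (simp add: sums_iff scaleR_conv_of_real)
  then show "set_integrable lborel {0<..} (\<lambda>t. exp (- t) * f1_i t * t ^ m)"
    unfolding set_integrable_def complex_of_real_integrable_eq g_def .
  have "(\<lambda>j. integral\<^sup>L lborel (f j)) sums integral\<^sup>L lborel (\<lambda>t. \<Sum>j. f j t)"
    by (rule sums_integral[OF int AE_I2[OF summable_norm_f] summable_int])
  then have "integral\<^sup>L lborel (\<lambda>t. \<Sum>j. f j t) = fact m * eisenstein (Suc m) / 8"
    using sum_int sums_unique2 by fastforce
  then show "complex_of_real (LINT t:{0<..}|lborel. exp (- t) * f1_i t * t ^ m) = fact m * eisenstein (Suc m) / 8"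
    using sum_f unfolding set_lebesgue_integral_def g_def
    by (simp add: sums_iff scaleR_conv_of_real flip: integral_complex_of_real)
qed

section \<open>Taylor coefficients of the Weierstrass function\<close>

lemma lat_pt_eq: "lat_pt p = of_real omega_t * gauss p"
  by (simp add: lat_pt_def gauss_def)

lemma norm_lat_pt_ge: "p \<in> gauss_nonzero \<Longrightarrow> norm (lat_pt p) \<ge> \<bar>omega_t\<bar>"
  using norm_gauss_ge_1[of p] mult_left_mono[of 1 "norm (gauss p)" "\<bar>omega_t\<bar>"]
  by (auto simp: lat_pt_eq norm_mult)

definition wp_term :: "complex \<Rightarrow> int \<times> int \<Rightarrow> nat \<Rightarrow> complex" where
  "wp_term z p j = (if j = 0 then 0 else of_nat (Suc j) * z ^ j / lat_pt p ^ (j + 2))"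

definition wp_coeff :: "nat \<Rightarrow> complex" where
  "wp_coeff j = (if j = 0 then 0 else of_nat (Suc j) * eisenstein (j + 2) / of_real omega_t ^ (j + 2))"

lemma has_sum_wp_term:
  assumes "p \<in> gauss_nonzero" "norm z < \<bar>omega_t\<bar>"
  shows "(wp_term z p has_sum (1 / (z - lat_pt p) ^ 2 - 1 / lat_pt p ^ 2)) UNIV"
proof -
  define g where "g j = of_nat (Suc j) * z ^ j / lat_pt p ^ (j + 2)" for j
  have "norm z < norm (lat_pt p)" using norm_lat_pt_ge[OF assms(1)] assms(2) by simp
  note shift = sums_inverse_square_shift[OF this, folded g_def]
  have "wp_term z p = (\<lambda>j. g j - (if j = 0 then g j else 0))"
    by (auto simp: wp_term_def g_def)
  moreover have "(\<lambda>j. g j - (if j = 0 then g j else 0)) sums (1 / (z - lat_pt p) ^ 2 - 1 / lat_pt p ^ 2)"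
    using sums_diff[OF shift(1) sums_single[of 0 g]] by (simp add: g_def power2_eq_square)
  moreover have "summable (\<lambda>j. norm (wp_term z p j))"
    by (rule summable_comparison_test'[OF shift(2)]) (simp add: wp_term_def g_def)
  ultimately show ?thesis
    by (simp add: norm_summable_imp_has_sum)
qed

lemma infsum_wp_term:
  "infsum (\<lambda>p. wp_term z p j) gauss_nonzero = wp_coeff j * z ^ j"
proof (cases "j = 0")
  case False
  have "infsum (\<lambda>p. wp_term z p j) gauss_nonzero
      = infsum (\<lambda>p. (of_nat (Suc j) * z ^ j / of_real omega_t ^ (j + 2)) * eisenstein_term (j + 2) p) gauss_nonzero"
    using False by (intro infsum_cong) (simp add: wp_term_def eisenstein_term_def lat_pt_eq power_mult_distrib)
  also have "\<dots> = (of_nat (Suc j) * z ^ j / of_real omega_t ^ (j + 2)) * eisenstein (j + 2)"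
    unfolding eisenstein_def by (rule infsum_cmult_right')
  also have "\<dots> = wp_coeff j * z ^ j"
    using False by (simp add: wp_coeff_def)
  finally show ?thesis .
qed (simp add: wp_term_def wp_coeff_def)

lemma summable_on_wp_term:
  assumes "norm z < \<bar>omega_t\<bar>"
  shows "(\<lambda>(p, j). wp_term z p j) summable_on (gauss_nonzero \<times> UNIV)"
proof -
  define W where "W = \<bar>omega_t\<bar>"
  have W: "W > 0" using assms norm_ge_zero[of z] unfolding W_def by linarith
  define a where "a j = of_nat (Suc j) * (norm z / W) ^ j / W ^ 2" for j
  define b where "b p = 1 / norm (gauss p) ^ 3" for p
  have "norm (norm z / W) < 1" using assms W by (simp add: W_def)
  then have "summable a"
    unfolding a_def by (rule summable_divide[OF sums_summable[OF geometric_deriv_sums]])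
  then have "a summable_on UNIV"
    using W by (subst summable_on_UNIV_nonneg_real_iff) (auto simp: a_def)
  moreover have "b summable_on gauss_nonzero"
    unfolding b_def by (rule summable_on_inverse_norm_gauss_power) simp
  moreover have "a j \<ge> 0" "b p \<ge> 0" for j p
    using W by (simp_all add: a_def b_def)
  ultimately have product: "(\<lambda>x. b (fst x) * a (snd x)) summable_on (gauss_nonzero \<times> UNIV)"
    by (intro summable_on_product_nonneg)
  have bound: "norm (wp_term z p j) \<le> b p * a j" if "p \<in> gauss_nonzero" for p j
  proof (cases "j = 0")
    case False
    have g: "norm (gauss p) \<ge> 1" using norm_gauss_ge_1 that by auto
    then have "W ^ (j + 2) * norm (gauss p) ^ 3 \<le> W ^ (j + 2) * norm (gauss p) ^ (j + 2)"
      using False W by (intro mult_left_mono power_increasing) auto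
    then have "of_nat (Suc j) * norm z ^ j / (W ^ (j + 2) * norm (gauss p) ^ (j + 2))
        \<le> of_nat (Suc j) * norm z ^ j / (W ^ (j + 2) * norm (gauss p) ^ 3)"
      using W g by (intro divide_left_mono) (auto intro!: mult_pos_pos zero_less_power)
    moreover have "norm (wp_term z p j) = of_nat (Suc j) * norm z ^ j / (W ^ (j + 2) * norm (gauss p) ^ (j + 2))"
      using False norm_of_nat[of "Suc j", where 'a = complex]
      by (simp add: wp_term_def norm_mult norm_divide norm_power lat_pt_eq W_def power_mult_distrib mult_ac)
    moreover have "b p * a j = of_nat (Suc j) * norm z ^ j / (W ^ (j + 2) * norm (gauss p) ^ 3)"
      using W by (simp add: a_def b_def power_divide power_add field_simps power2_eq_square)
    ultimately show ?thesis by simp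
  qed (simp add: wp_term_def a_def b_def W)
  have "(\<lambda>x. norm ((\<lambda>(p, j). wp_term z p j) x)) summable_on (gauss_nonzero \<times> UNIV)"
  proof (rule Infinite_Sum.abs_summable_on_comparison_test'[OF product])
    fix x :: "(int \<times> int) \<times> nat" assume "x \<in> gauss_nonzero \<times> UNIV"
    then show "norm ((\<lambda>(p, j). wp_term z p j) x) \<le> b (fst x) * a (snd x)"
      using bound[of "fst x" "snd x"] by (simp add: case_prod_unfold mem_Times_iff)
  qed
  then show ?thesis by (rule abs_summable_summable)
qed

lemma has_sum_wp_reg:
  assumes "norm z < \<bar>omega_t\<bar>"
  shows "((\<lambda>j. wp_coeff j * z ^ j) has_sum wp_reg z) UNIV"
proof -
  note joint = summable_on_wp_term[OF assms]
  have "wp_reg z = infsum (\<lambda>p. infsum (wp_term z p) UNIV) gauss_nonzero"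
    unfolding wp_reg_def
    by (intro infsum_cong) (use has_sum_wp_term[OF _ assms] in \<open>auto simp: has_sum_iff\<close>)
  also have "\<dots> = infsum (\<lambda>j. infsum (\<lambda>p. wp_term z p j) gauss_nonzero) UNIV"
    by (rule infsum_swap_banach[OF joint])
  finally have "wp_reg z = infsum (\<lambda>j. wp_coeff j * z ^ j) UNIV"
    by (simp add: infsum_wp_term)
  moreover have "(\<lambda>j. infsum (\<lambda>p. wp_term z p j) gauss_nonzero) summable_on UNIV"
    using joint by (subst (asm) summable_on_swap) (auto intro: summable_on_Sigma_banach simp: case_prod_unfold)
  ultimately show ?thesis
    by (simp add: infsum_wp_term has_sum_iff)
qed

lemma wp_reg_has_fps_expansion:
  assumes "omega_t \<noteq> 0"
  shows "wp_reg has_fps_expansion Abs_fps wp_coeff"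
  unfolding has_fps_expansion_def
proof
  define r where "r = \<bar>omega_t\<bar> / 2"
  have r: "r > 0" "norm (complex_of_real r) < \<bar>omega_t\<bar>"
    using assms by (auto simp: r_def)
  have "summable (\<lambda>n. wp_coeff n * complex_of_real r ^ n)"
    using has_sum_wp_reg[OF r(2)] by (intro summable_on_imp_summable) (auto simp: summable_on_def)
  then have "conv_radius wp_coeff \<ge> norm (complex_of_real r)"
    by (rule conv_radius_geI)
  then show "fps_conv_radius (Abs_fps wp_coeff) > 0"
    using r(1) unfolding fps_conv_radius_def by (simp add: order_less_le_trans[of 0 "ereal r"])
  have "eventually (\<lambda>z. z \<in> ball 0 \<bar>omega_t\<bar>) (nhds 0)"
    using assms by (intro eventually_nhds_in_open) auto
  then show "eventually (\<lambda>z. eval_fps (Abs_fps wp_coeff) z = wp_reg z) (nhds 0)"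
  proof eventually_elim
    case (elim z)
    then show ?case
      using has_sum_imp_sums[OF has_sum_wp_reg[of z]] by (simp add: eval_fps_def sums_iff)
  qed
qed

lemma Hurwitz_eq_eisenstein:
  assumes "omega_t \<noteq> 0" "n \<ge> 3"
  shows "Hurwitz n = of_nat n / 2 ^ n * (fact (n - 1) * eisenstein n / of_real omega_t ^ n)"
proof -
  have "(deriv ^^ (n - 2)) wp_reg 0 = fact (n - 2) * wp_coeff (n - 2)"
    using fps_nth_fps_expansion[OF wp_reg_has_fps_expansion[OF assms(1)], of "n - 2"]
    by (simp add: field_simps)
  also have "\<dots> = fact (n - 1) * eisenstein n / of_real omega_t ^ n"
  proof -
    have n: "n - 2 \<noteq> 0" "Suc (n - 2) = n - 1" "n - 2 + 2 = n"
      using assms(2) by auto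
    then have "fact (n - 2) * of_nat (n - 1) = (fact (n - 1) :: complex)"
      by (metis fact_Suc mult.commute of_nat_fact of_nat_mult)
    then show ?thesis
      using n by (simp add: wp_coeff_def mult.assoc[symmetric])
  qed
  finally show ?thesis
    by (simp add: Hurwitz_def)
qed

text \<open>\<open>omega_t\<close> is in fact positive, but this degenerate case is cheaper to treat than to exclude:
  every lattice point is then \<open>0\<close>, so \<open>wp_reg\<close> sums a nonzero constant over an infinite set
  and is \<open>0\<close> by the convention for divergent sums.\<close>

lemma wp_reg_omega_t_eq_0:
  assumes "omega_t = 0" shows "wp_reg = (\<lambda>_. 0)"
proof
  fix z :: complex
  have "wp_reg z = infsum (\<lambda>_. 1 / z ^ 2) gauss_nonzero"
    unfolding wp_reg_def using assms by (simp add: lat_pt_def)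
  moreover have "\<not> (\<lambda>_. 1 / z ^ 2) summable_on gauss_nonzero" if "z \<noteq> 0"
  proof
    assume "(\<lambda>_. 1 / z ^ 2) summable_on gauss_nonzero"
    then have "(\<lambda>_. norm (1 / z ^ 2)) summable_on gauss_nonzero"
      by (subst (asm) summable_on_iff_abs_summable_on_complex)
    moreover have "infinite gauss_nonzero"
      by (simp add: finite_prod)
    moreover have "norm (1 / z ^ 2) \<noteq> 0"
      using that by simp
    ultimately show False
      using infsum_diverge_constant by blast
  qed
  ultimately show "wp_reg z = 0"
    by (cases "z = 0") (simp_all add: infsum_not_exists)
qed

lemma integral_theta_kernel_eq_eisenstein:
  assumes "4 dvd Suc m" "m \<ge> 2"
  shows "complex_of_real (integral {0..} (\<lambda>t. exp (- t) * f1_i t * t ^ m)) = fact m * eisenstein (Suc m) / 8"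
proof -
  have "integral {0..} (\<lambda>t. exp (- t) * f1_i t * t ^ m) = integral {0<..} (\<lambda>t. exp (- t) * f1_i t * t ^ m)"
    by (rule integral_spike_set) (auto intro: negligible_subset[OF negligible_sing[of 0]])
  also have "\<dots> = (LINT t:{0<..}|lborel. exp (- t) * f1_i t * t ^ m)"
    by (rule set_borel_integral_eq_integral(2)[symmetric, OF integral_theta_kernel(1)[OF assms]])
  finally show ?thesis
    using integral_theta_kernel(2)[OF assms] by simp
qed

lemma Hurwitz_eq_integral:
  assumes "omega_t \<noteq> 0" "4 dvd n" "n \<ge> 4"
  shows "Hurwitz n = complex_of_real (8 * real n / (2 ^ n * omega_t ^ n)
    * integral {0..} (\<lambda>t. exp (- t) * f1_i t * t ^ (n - 1)))"
proof -
  have "Suc (n - 1) = n" using assms(3) by simp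
  then have "complex_of_real (integral {0..} (\<lambda>t. exp (- t) * f1_i t * t ^ (n - 1)))
      = fact (n - 1) * eisenstein n / 8"
    using integral_theta_kernel_eq_eisenstein[of "n - 1"] assms(2,3) by simp
  moreover have "Hurwitz n = of_nat n / 2 ^ n * (fact (n - 1) * eisenstein n / of_real omega_t ^ n)"
    using Hurwitz_eq_eisenstein[OF assms(1)] assms(3) by simp
  ultimately show ?thesis
    using assms(1) by (simp add: field_simps)
qed

lemma Hurwitz_omega_t_eq_0:
  assumes "omega_t = 0" shows "Hurwitz n = 0"
proof -
  have "(deriv ^^ j) (\<lambda>_. 0 :: complex) = (\<lambda>_. 0)" for j
    by (induction j) auto
  then show ?thesis
    by (simp add: Hurwitz_def wp_reg_omega_t_eq_0[OF assms])
qed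

theorem theorem14:
  fixes k :: nat
  assumes "k \<ge> 1"
  shows "Hurwitz (2 * k + 2) =
    complex_of_real (2 * real (k + 1) / (4 ^ k * omega_t ^ (2 * k + 2))
      * (1 + (-1) ^ (k + 1))
      * integral {0..} (\<lambda>t. exp (-t) * f1_i t * t ^ (2 * k + 1)))"
proof (cases "omega_t = 0")
  case True
  then show ?thesis by (simp add: Hurwitz_omega_t_eq_0)
next
  case omega: False
  show ?thesis
  proof (cases "even k")
    case True
    then have "eisenstein (2 * k + 2) = 0"
      by (intro eisenstein_eq_0) presburger
    with True show ?thesis
      using Hurwitz_eq_eisenstein[OF omega, of "2 * k + 2"] assms by simp
  next
    case False
    moreover have "8 * real (2 * k + 2) / (2 ^ (2 * k + 2) * omega_t ^ (2 * k + 2))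
        = 2 * real (k + 1) / (4 ^ k * omega_t ^ (2 * k + 2)) * (1 + (-1) ^ (k + 1))"
    proof -
      have "(2 :: real) ^ (2 * k + 2) = 4 * 4 ^ k"
        by (simp add: power_add power_mult)
      then show ?thesis
        using False omega by (simp add: field_simps)
    qed
    moreover have "4 dvd 2 * k + 2"
      using False by presburger
    ultimately show ?thesis
      using Hurwitz_eq_integral[OF omega, of "2 * k + 2"] assms by simp
  qed
qed

end
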